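(* Let $\alpha>-1$ and let $\phi(w)=aw+b$ with $a>0$ and $\mathrm{Re}(b)\ge 0$. Then $C_\phi$ does not admit an irregular vector on $\mathcal{A}^2_\alpha(\mathbb{C}_+)$; that is, there is no $f\in\mathcal{A}^2_\alpha(\mathbb{C}_+)$ with $\liminf_{n\to\infty}\|C_\phi^n f\|=0$ and $\limsup_{n\to\infty}\|C_\phi^n f\|=\infty$.
   Context: $\mathbb{C}_+=\{z\in\mathbb{C}:\mathrm{Re}(z)>0\}$. For $\alpha>-1$, $\mathcal{A}^2_\alpha(\mathbb{C}_+)$ is the Hilbert space of analytic $f:\mathbb{C}_+\to\mathbb{C}$ with $\|f\|^2=\frac{1}{\pi}\int_{-\infty}^{\infty}\int_0^\infty |f(x+iy)|^2x^\alpha\,dx\,dy<\infty$. $C_\phi f=f\circ\phi$ is the (bounded) composition operator. *)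

theory Defs
  imports "HOL-Analysis.Analysis"
begin

definition right_half_plane :: "complex set" where
  "right_half_plane = {z. Re z > 0}"

definition bergman_sqnorm :: "real \<Rightarrow> (complex \<Rightarrow> complex) \<Rightarrow> ennreal" where
  "bergman_sqnorm \<alpha> f =
     ennreal (1 / pi) *
     (\<integral>\<^sup>+ z. indicator right_half_plane z * ennreal ((cmod (f z))\<^sup>2 * Re z powr \<alpha>) \<partial>lborel)"

definition bergman_norm :: "real \<Rightarrow> (complex \<Rightarrow> complex) \<Rightarrow> ereal" where
  "bergman_norm \<alpha> f =
     (if bergman_sqnorm \<alpha> f = \<infinity> then \<infinity>
      else ereal (sqrt (enn2real (bergman_sqnorm \<alpha> f))))"

definition bergman_space :: "real \<Rightarrow> (complex \<Rightarrow> complex) set" where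
  "bergman_space \<alpha> =
     {f. f holomorphic_on right_half_plane \<and> bergman_sqnorm \<alpha> f < \<infinity>}"

definition comp_op :: "(complex \<Rightarrow> complex) \<Rightarrow> (complex \<Rightarrow> complex) \<Rightarrow> (complex \<Rightarrow> complex)" where
  "comp_op \<phi> f = f \<circ> \<phi>"

end

theory Submission
  imports Defs "HOL-Complex_Analysis.Complex_Analysis"
begin

text \<open>
  The n-th iterate of phi is w \<mapsto> a^n w + b_n with b_n = b (1 + a + ... + a^(n-1)). Write M(x)
  for the integral of |f|^2 over the vertical line Re z = x and I(r) for the integral over x > r of
  (x - r)^alpha M(x). Fubini and an affine change of variables give
  pi ||C_phi^n f||^2 = a^(-n (2 + alpha)) I(Re b_n).

  If a \<ge> 1, the factor is at most 1 and I(r) \<le> K I(0) for all r \<ge> 0: for alpha \<ge> 0 because the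
  weight decreases in r, for alpha < 0 because the sub-mean-value property of the holomorphic
  function f^2 on squares bounds M near the singularity of the weight by an average of M against
  the unshifted weight. Hence the orbit is bounded.

  If a < 1, the factor is at least 1 and Re b_n stays in [0, Re b / (1 - a)], where I is bounded
  below by a positive constant unless f vanishes on a half-plane, hence everywhere. So the orbit
  norms are either bounded away from 0 or identically 0.
\<close>

section \<open>Lebesgue integrals on the line and the plane\<close>

lemma measurable_Complex [measurable (raw)]:
  "f \<in> borel_measurable M \<Longrightarrow> g \<in> borel_measurable M \<Longrightarrow> (\<lambda>x. Complex (f x) (g x)) \<in> borel_measurable M"
  by (subst borel_measurable_complex_iff) simp

lemma lborel_complex_eq_distr_pair:
  "lborel = distr (lborel \<Otimes>\<^sub>M lborel) borel (\<lambda>(x, y). Complex x y)"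
proof (rule lborel_eqI)
  fix l u :: complex
  assume le: "\<And>b. b \<in> Basis \<Longrightarrow> l \<bullet> b \<le> u \<bullet> b"
  then have "Re l \<le> Re u" "Im l \<le> Im u"
    using le[of 1] le[of \<i>] by (auto simp: Basis_complex_def inner_complex_def)
  moreover have "(\<lambda>(x, y). Complex x y) -` box l u \<inter> space (lborel \<Otimes>\<^sub>M lborel)
      = {Re l<..<Re u} \<times> {Im l<..<Im u}"
    by (auto simp: in_box_complex_iff space_pair_measure)
  ultimately show "emeasure (distr (lborel \<Otimes>\<^sub>M lborel) borel (\<lambda>(x, y). Complex x y)) (box l u)
      = (\<Prod>b\<in>Basis. (u - l) \<bullet> b)"
    by (simp add: emeasure_distr case_prod_unfold lborel.emeasure_pair_measure_Times
        Basis_complex_def inner_complex_def ennreal_mult[symmetric])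
qed simp

lemma nn_integral_lborel_complex:
  fixes F :: "complex \<Rightarrow> ennreal"
  assumes [measurable]: "F \<in> borel_measurable borel"
  shows "(\<integral>\<^sup>+z. F z \<partial>lborel) = (\<integral>\<^sup>+x. (\<integral>\<^sup>+y. F (Complex x y) \<partial>lborel) \<partial>lborel)"
proof -
  have "(\<integral>\<^sup>+z. F z \<partial>lborel) = (\<integral>\<^sup>+p. F (Complex (fst p) (snd p)) \<partial>(lborel \<Otimes>\<^sub>M lborel))"
    by (subst lborel_complex_eq_distr_pair) (simp add: nn_integral_distr case_prod_unfold)
  also have "\<dots> = (\<integral>\<^sup>+x. (\<integral>\<^sup>+y. F (Complex x y) \<partial>lborel) \<partial>lborel)"
    by (subst lborel.nn_integral_fst[symmetric]) simp_all
  finally show ?thesis .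
qed

lemma nn_integral_Icc_affine_unit:
  fixes F :: "real \<Rightarrow> ennreal"
  assumes [measurable]: "F \<in> borel_measurable borel" and "u < v"
  shows "ennreal (v - u) * (\<integral>\<^sup>+t. indicator {0..1} t * F (u + t * (v - u)) \<partial>lborel)
       = (\<integral>\<^sup>+s. indicator {u..v} s * F s \<partial>lborel)"
proof -
  have "u + (v - u) * t \<in> {u..v} \<longleftrightarrow> t \<in> {0..1}" for t
    using mult_le_cancel_left_pos[of "v - u" 0 t] mult_le_cancel_left_pos[of "v - u" t 1] assms(2)
    by (auto simp: algebra_simps)
  then have "indicator {u..v} (u + (v - u) * t) = (indicator {0..1} t :: ennreal)" for t
    by (simp add: indicator_def)
  then show ?thesis
    using nn_integral_real_affine[of "\<lambda>s. indicator {u..v} s * F s" "v - u" u] assms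
    by (simp add: mult.commute)
qed

lemma exists_le_interval_average:
  fixes B :: "real \<Rightarrow> ennreal"
  assumes [measurable]: "B \<in> borel_measurable borel" and ab: "a < b"
  shows "\<exists>t\<in>{a..b}. B t * ennreal (b - a) \<le> (\<integral>\<^sup>+u. indicator {a..b} u * B u \<partial>lborel)"
proof (rule ccontr)
  define A where "A = (\<integral>\<^sup>+u. indicator {a..b} u * B u \<partial>lborel)"
  assume "\<not> ?thesis"
  then have lt: "\<And>t. t \<in> {a..b} \<Longrightarrow> A < B t * ennreal (b - a)"
    by (auto simp: not_le A_def)
  moreover have "a \<in> {a..b}" using ab by simp
  ultimately have "A \<noteq> \<infinity>" using top.not_eq_extremum by fastforce
  then obtain \<beta> where \<beta>: "A = ennreal \<beta>" "0 \<le> \<beta>" by (cases A) auto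
  define c where "c = \<beta> / (b - a)"
  have c: "c \<ge> 0" using \<beta> ab by (simp add: c_def)
  have ct: "ennreal c < B t" if "t \<in> {a..b}" for t
  proof (cases "B t")
    case (real \<gamma>)
    then have "\<beta> < \<gamma> * (b - a)" using lt[OF that] \<beta> ab
      by (simp add: ennreal_mult'[symmetric] ennreal_less_iff)
    then show ?thesis using real c ab by (simp add: c_def divide_less_eq ennreal_less_iff)
  qed simp
  have "(\<integral>\<^sup>+u. ennreal c * indicator {a..b} u \<partial>lborel) < A"
    unfolding A_def
  proof (rule nn_integral_less)
    show "(\<integral>\<^sup>+u. ennreal c * indicator {a..b} u \<partial>lborel) \<noteq> \<infinity>"
      using ab by (simp add: nn_integral_cmult_indicator ennreal_mult_eq_top_iff)
    show "AE x in lborel. ennreal c * indicator {a..b} x \<le> indicator {a..b} x * B x"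
      using ct by (auto simp: indicator_def less_imp_le)
    show "\<not> (AE x in lborel. indicator {a..b} x * B x \<le> ennreal c * indicator {a..b} x)"
    proof
      assume "AE x in lborel. indicator {a..b} x * B x \<le> ennreal c * indicator {a..b} x"
      then have "AE x in lborel. x \<notin> {a..b}"
        by eventually_elim (use ct in \<open>force simp: indicator_def not_le\<close>)
      then have "{x. a \<le> x \<and> x \<le> b} \<in> null_sets lborel"
        by (subst (asm) AE_iff_null) auto
      then have "emeasure lborel {x. a \<le> x \<and> x \<le> b} = 0" by (auto simp: null_sets_def)
      moreover have "{x. a \<le> x \<and> x \<le> b} = {a..b}" by auto
      ultimately show False using ab by simp
    qed
  qed simp_all
  moreover have "(\<integral>\<^sup>+u. ennreal c * indicator {a..b} u \<partial>lborel) = A"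
    using ab \<beta> by (simp add: nn_integral_cmult_indicator c_def ennreal_mult'[symmetric])
  ultimately show False by simp
qed

lemma exists_le_average_subinterval:
  fixes B :: "real \<Rightarrow> ennreal"
  assumes "B \<in> borel_measurable borel" and "0 < l" "a \<le> c" "c + l \<le> b"
  shows "\<exists>t\<in>{c..c + l}. B t * ennreal l \<le> (\<integral>\<^sup>+u. indicator {a..b} u * B u \<partial>lborel)"
proof -
  obtain t where t: "t \<in> {c..c + l}"
    and le: "B t * ennreal l \<le> (\<integral>\<^sup>+u. indicator {c..c + l} u * B u \<partial>lborel)"
    using exists_le_interval_average[OF assms(1), of c "c + l"] assms(2) by auto
  have "(\<integral>\<^sup>+u. indicator {c..c + l} u * B u \<partial>lborel) \<le> (\<integral>\<^sup>+u. indicator {a..b} u * B u \<partial>lborel)"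
    using assms by (intro nn_integral_mono mult_right_mono) (auto simp: indicator_def)
  then show ?thesis using t le by (blast intro: order.trans)
qed

lemma nn_integral_shifted_powr_le:
  assumes "-1 < \<alpha>" "0 < r"
  shows "(\<integral>\<^sup>+x. ennreal (indicator {r<..<2*r} x * (x - r) powr \<alpha>) \<partial>lborel)
      \<le> ennreal (r powr (\<alpha> + 1) / (\<alpha> + 1))"
proof -
  have "(\<integral>\<^sup>+x. ennreal (indicator {r<..<2*r} x * (x - r) powr \<alpha>) \<partial>lborel)
      = (\<integral>\<^sup>+u. ennreal (indicator {r<..<2*r} (r + 1 * u) * (r + 1 * u - r) powr \<alpha>) \<partial>lborel)"
    using nn_integral_real_affine[of "\<lambda>x. ennreal (indicator {r<..<2*r} x * (x - r) powr \<alpha>)" 1 r]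
    by simp
  also have "\<dots> \<le> (\<integral>\<^sup>+u. ennreal (indicator {0..r} u * u powr \<alpha>) \<partial>lborel)"
    by (intro nn_integral_mono ennreal_leI) (auto simp: indicator_def)
  also have "\<dots> = ennreal (r powr (\<alpha> + 1) / (\<alpha> + 1))"
    using nn_integral_has_integral_lebesgue[OF _ has_integral_powr_from_0[of \<alpha> r]] assms
    by (simp add: ennreal_indicator ennreal_mult')
  finally show ?thesis .
qed

lemma nn_integral_window:
  fixes F :: "real \<Rightarrow> ennreal"
  assumes [measurable]: "F \<in> borel_measurable borel" and "0 \<le> h"
  shows "(\<integral>\<^sup>+y. (\<integral>\<^sup>+t. indicator {-h..h} (t - y) * F t \<partial>lborel) \<partial>lborel) = ennreal (2 * h) * (\<integral>\<^sup>+t. F t \<partial>lborel)"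
proof -
  have "(\<integral>\<^sup>+y. (\<integral>\<^sup>+t. indicator {-h..h} (t - y) * F t \<partial>lborel) \<partial>lborel)
      = (\<integral>\<^sup>+t. (\<integral>\<^sup>+y. F t * indicator {t-h..t+h} y \<partial>lborel) \<partial>lborel)"
    by (subst lborel_pair.Fubini') (measurable, auto intro!: nn_integral_cong simp: indicator_def mult.commute)
  also have "\<dots> = (\<integral>\<^sup>+t. ennreal (2 * h) * F t \<partial>lborel)"
    using assms(2) by (intro nn_integral_cong) (simp add: nn_integral_cmult_indicator mult.commute)
  also have "\<dots> = ennreal (2 * h) * (\<integral>\<^sup>+t. F t \<partial>lborel)"
    by (rule nn_integral_cmult) measurable
  finally show ?thesis .
qed

section \<open>Norms of compositions with affine maps\<close>

lemma open_right_half_plane: "open right_half_plane"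
  unfolding right_half_plane_def by (simp add: open_halfspace_Re_gt)

text \<open>Integrals over the right half-plane are taken over all of \<open>\<complex>\<close>, with integrands
  extended by zero.\<close>

definition rhp_norm :: "(complex \<Rightarrow> complex) \<Rightarrow> complex \<Rightarrow> real" where
  "rhp_norm g z = (if 0 < Re z then cmod (g z) else 0)"

definition vertical_sqnorm :: "(complex \<Rightarrow> complex) \<Rightarrow> real \<Rightarrow> ennreal" where
  "vertical_sqnorm f x = (\<integral>\<^sup>+y. ennreal ((rhp_norm f (Complex x y))\<^sup>2) \<partial>lborel)"

text \<open>\<open>shifted_sqnorm \<alpha> f r\<close> is pi times the squared norm of \<open>f (w + r)\<close> in A^2_alpha.\<close>

definition shifted_sqnorm :: "real \<Rightarrow> (complex \<Rightarrow> complex) \<Rightarrow> real \<Rightarrow> ennreal" where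
  "shifted_sqnorm \<alpha> f r =
     (\<integral>\<^sup>+x. ennreal (indicator {r<..} x * (x - r) powr \<alpha>) * vertical_sqnorm f x \<partial>lborel)"

lemma rhp_norm_measurable:
  assumes "continuous_on right_half_plane g"
  shows "rhp_norm g \<in> borel_measurable borel"
proof -
  have "rhp_norm g = (\<lambda>z. indicator right_half_plane z *\<^sub>R cmod (g z))"
    by (auto simp: rhp_norm_def right_half_plane_def fun_eq_iff)
  moreover have "(\<lambda>z. indicator right_half_plane z *\<^sub>R cmod (g z)) \<in> borel_measurable borel"
    using open_right_half_plane
    by (intro borel_measurable_continuous_on_indicator continuous_intros assms) auto
  ultimately show ?thesis by simp
qed

lemma vertical_sqnorm_measurable:
  assumes "continuous_on right_half_plane f"
  shows "vertical_sqnorm f \<in> borel_measurable borel"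
proof -
  note [measurable] = rhp_norm_measurable[OF assms]
  have "(\<lambda>p. ennreal ((rhp_norm f (Complex (fst p) (snd p)))\<^sup>2)) \<in> borel_measurable (lborel \<Otimes>\<^sub>M lborel)"
    by measurable
  from lborel.borel_measurable_nn_integral_fst[OF this] show ?thesis
    by (simp add: vertical_sqnorm_def[abs_def])
qed

lemma shifted_sqnorm_eq_zero:
  assumes "\<forall>z\<in>right_half_plane. f z = 0"
  shows "shifted_sqnorm \<alpha> f r = 0"
proof -
  have "rhp_norm f z = 0" for z
    using assms by (simp add: rhp_norm_def right_half_plane_def)
  then show ?thesis by (simp add: shifted_sqnorm_def vertical_sqnorm_def)
qed

lemma shifted_sqnorm_rescale:
  assumes cont: "continuous_on right_half_plane f" and c: "0 < c"
  shows "shifted_sqnorm \<alpha> f t = ennreal (c powr (1 + \<alpha>)) *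
      (\<integral>\<^sup>+x. ennreal (indicator {0<..} x * x powr \<alpha>) * vertical_sqnorm f (c * x + t) \<partial>lborel)"
proof -
  note [measurable] = vertical_sqnorm_measurable[OF cont]
  have "ennreal (indicator {t<..} (t + c * x) * (t + c * x - t) powr \<alpha>)
      = ennreal (c powr \<alpha>) * ennreal (indicator {0<..} x * x powr \<alpha>)" for x
    using c by (auto simp: indicator_def powr_mult ennreal_mult' zero_less_mult_iff)
  then have "shifted_sqnorm \<alpha> f t = ennreal c * (\<integral>\<^sup>+x. ennreal (c powr \<alpha>) *
      (ennreal (indicator {0<..} x * x powr \<alpha>) * vertical_sqnorm f (c * x + t)) \<partial>lborel)"
    unfolding shifted_sqnorm_def using c
    by (subst nn_integral_real_affine[where c = c and t = t]) (simp_all add: mult.assoc add.commute)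
  also have "\<dots> = ennreal (c * c powr \<alpha>) *
      (\<integral>\<^sup>+x. ennreal (indicator {0<..} x * x powr \<alpha>) * vertical_sqnorm f (c * x + t) \<partial>lborel)"
    using c by (simp add: nn_integral_cmult ennreal_mult mult.assoc)
  finally show ?thesis using c by (simp add: powr_add)
qed

lemma bergman_sqnorm_comp_affine_eq_integral:
  assumes cont: "continuous_on right_half_plane f" and c: "0 < c" and d: "0 \<le> Re d"
  shows "bergman_sqnorm \<alpha> (f \<circ> (\<lambda>w. of_real c * w + d)) = ennreal (1 / pi) * (ennreal (1 / c) *
      (\<integral>\<^sup>+x. ennreal (indicator {0<..} x * x powr \<alpha>) * vertical_sqnorm f (c * x + Re d) \<partial>lborel))"
proof -
  note [measurable] = rhp_norm_measurable[OF cont] vertical_sqnorm_measurable[OF cont]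
  define F where "F z = ennreal ((rhp_norm f z)\<^sup>2)" for z
  define A where "A x = ennreal (indicator {0<..} x * x powr \<alpha>)" for x :: real
  have [measurable]: "F \<in> borel_measurable borel" "A \<in> borel_measurable borel"
    unfolding F_def A_def by measurable
  have integrand: "indicator right_half_plane z * ennreal ((cmod ((f \<circ> (\<lambda>w. of_real c * w + d)) z))\<^sup>2 * Re z powr \<alpha>)
      = A (Re z) * F (Complex (c * Re z + Re d) (Im d + c * Im z))" for z
  proof (cases "0 < Re z")
    case True
    then have "0 < c * Re z + Re d" using c d by (simp add: add_pos_nonneg)
    moreover have "of_real c * z + d = Complex (c * Re z + Re d) (Im d + c * Im z)"
      by (simp add: complex_eq_iff)
    ultimately show ?thesis using True
      by (simp add: A_def F_def rhp_norm_def right_half_plane_def ennreal_mult' mult.commute)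
  qed (simp add: A_def right_half_plane_def)
  have vertical: "(\<integral>\<^sup>+y. A x * F (Complex (c * x + Re d) (Im d + c * y)) \<partial>lborel)
      = ennreal (1 / c) * (A x * vertical_sqnorm f (c * x + Re d))" for x
  proof -
    have "vertical_sqnorm f (c * x + Re d)
        = ennreal c * (\<integral>\<^sup>+y. F (Complex (c * x + Re d) (Im d + c * y)) \<partial>lborel)"
      unfolding vertical_sqnorm_def F_def[symmetric]
      using nn_integral_real_affine[of "\<lambda>y. F (Complex (c * x + Re d) y)" c "Im d"] c by simp
    then have "(\<integral>\<^sup>+y. F (Complex (c * x + Re d) (Im d + c * y)) \<partial>lborel)
        = ennreal (1 / c) * vertical_sqnorm f (c * x + Re d)"
      using c by (simp add: ennreal_mult'[symmetric] mult.assoc[symmetric]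
          divide_ennreal[symmetric] ennreal_divide_times)
    then show ?thesis
      by (subst nn_integral_cmult) (measurable, simp add: mult.left_commute)
  qed
  have "bergman_sqnorm \<alpha> (f \<circ> (\<lambda>w. of_real c * w + d))
      = ennreal (1 / pi) * (\<integral>\<^sup>+x. (\<integral>\<^sup>+y. A x * F (Complex (c * x + Re d) (Im d + c * y)) \<partial>lborel) \<partial>lborel)"
    unfolding bergman_sqnorm_def integrand by (subst nn_integral_lborel_complex) simp_all
  then show ?thesis
    unfolding vertical A_def[symmetric] by (simp add: nn_integral_cmult)
qed

lemma bergman_sqnorm_comp_affine:
  assumes cont: "continuous_on right_half_plane f" and c: "0 < c" and d: "0 \<le> Re d"
  shows "bergman_sqnorm \<alpha> (f \<circ> (\<lambda>w. of_real c * w + d)) =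
         ennreal (1 / pi) * (ennreal (c powr (-2 - \<alpha>)) * shifted_sqnorm \<alpha> f (Re d))"
proof -
  have "c powr (-2 - \<alpha>) * c powr (1 + \<alpha>) = 1 / c"
    using c by (simp add: powr_minus_divide flip: powr_add)
  then show ?thesis
    unfolding bergman_sqnorm_comp_affine_eq_integral[OF assms] shifted_sqnorm_rescale[OF cont c]
    using c by (simp add: mult.assoc[symmetric] ennreal_mult'[symmetric])
qed

lemma comp_op_affine_iterate:
  "(comp_op (\<lambda>w. of_real a * w + b) ^^ n) f
     = f \<circ> (\<lambda>w. of_real (a ^ n) * w + b * of_real (\<Sum>k<n. a ^ k))"
proof (induction n)
  case (Suc n)
  then show ?case by (simp add: comp_op_def fun_eq_iff algebra_simps)
qed (simp add: fun_eq_iff)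

lemma bergman_sqnorm_iterate:
  assumes "continuous_on right_half_plane f" "0 < a" "0 \<le> Re b"
  shows "bergman_sqnorm \<alpha> ((comp_op (\<lambda>w. of_real a * w + b) ^^ n) f)
       = ennreal (1 / pi) * (ennreal ((a ^ n) powr (-2 - \<alpha>)) * shifted_sqnorm \<alpha> f (Re b * (\<Sum>k<n. a ^ k)))"
proof -
  have "0 \<le> Re (b * of_real (\<Sum>k<n. a ^ k))" using assms by (simp add: sum_nonneg)
  then show ?thesis
    unfolding comp_op_affine_iterate
    using bergman_sqnorm_comp_affine[OF assms(1), of "a ^ n" "b * of_real (\<Sum>k<n. a ^ k)"] assms
    by simp
qed

section \<open>A sub-mean-value estimate\<close>

lemma norm_contour_integral_linepath_cauchy_le:
  assumes cont: "continuous_on right_half_plane g" and seg: "closed_segment a b \<subseteq> right_half_plane"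
    and dist: "\<And>w. w \<in> closed_segment a b \<Longrightarrow> \<delta> \<le> cmod (w - z)" and \<delta>: "0 < \<delta>"
  shows "ennreal (cmod (contour_integral (linepath a b) (\<lambda>w. g w / (w - z))))
     \<le> ennreal (cmod (b - a) / \<delta>) * (\<integral>\<^sup>+t. indicator {0..1} t * ennreal (rhp_norm g (linepath a b t)) \<partial>lborel)"
proof -
  note [measurable] = rhp_norm_measurable[OF cont]
  have [measurable]: "linepath a b \<in> borel_measurable borel"
    by (intro borel_measurable_continuous_onI continuous_on_linepath)
  define k where "k = (\<lambda>t. g (linepath a b t) / (linepath a b t - z) * (b - a))"
  define q where "q t = cmod (b - a) / \<delta> * cmod (g (linepath a b t))" for t
  have inseg: "t \<in> {0..1} \<Longrightarrow> linepath a b t \<in> closed_segment a b" for t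
    by (rule linepath_in_path)
  have rhp: "t \<in> {0..1} \<Longrightarrow> 0 < Re (linepath a b t)" for t
    using inseg seg by (auto simp: right_half_plane_def)
  have cg: "continuous_on {0..1} (\<lambda>t. g (linepath a b t))"
    by (rule continuous_on_compose2[OF cont continuous_on_linepath]) (use inseg seg in auto)
  have ck: "continuous_on {0..1} k"
    unfolding k_def using dist[OF inseg] \<delta> by (intro continuous_intros cg) fastforce
  have cq: "continuous_on {0..1} q" unfolding q_def by (intro continuous_intros cg)
  have "norm (integral {0..1} k) \<le> integral {0..1} q"
  proof (rule integral_norm_bound_integral)
    fix t :: real assume t: "t \<in> {0..1}"
    have "\<delta> \<le> cmod (linepath a b t - z)" using dist[OF inseg[OF t]] .
    have "norm (k t) = cmod (g (linepath a b t)) * cmod (b - a) / cmod (linepath a b t - z)"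
      by (simp add: k_def norm_mult norm_divide)
    also have "\<dots> \<le> cmod (g (linepath a b t)) * cmod (b - a) / \<delta>"
      using \<open>\<delta> \<le> _\<close> \<delta> by (intro divide_left_mono mult_pos_pos) auto
    also have "\<dots> = q t" by (simp add: q_def)
    finally show "norm (k t) \<le> q t" .
  qed (use ck cq integrable_continuous_real in auto)
  moreover have "contour_integral (linepath a b) (\<lambda>w. g w / (w - z)) = integral {0..1} k"
    unfolding contour_integral_integral k_def by simp
  ultimately have "ennreal (cmod (contour_integral (linepath a b) (\<lambda>w. g w / (w - z)))) \<le> ennreal (integral {0..1} q)"
    by (simp add: ennreal_leI)
  also have "\<dots> = (\<integral>\<^sup>+t. ennreal (indicator {0..1} t * q t) \<partial>lborel)"
    using nn_integral_has_integral_lebesgue[OF _ integrable_integral[OF integrable_continuous_real[OF cq]]] \<delta>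
    by (simp add: q_def)
  also have "\<dots> = (\<integral>\<^sup>+t. ennreal (cmod (b - a) / \<delta>) * (indicator {0..1} t * ennreal (rhp_norm g (linepath a b t))) \<partial>lborel)"
    using rhp \<delta> by (intro nn_integral_cong) (auto simp: q_def rhp_norm_def ennreal_mult'[symmetric] indicator_def)
  also have "\<dots> = ennreal (cmod (b - a) / \<delta>) * (\<integral>\<^sup>+t. indicator {0..1} t * ennreal (rhp_norm g (linepath a b t)) \<partial>lborel)"
    by (rule nn_integral_cmult) measurable
  finally show ?thesis .
qed

lemma norm_contour_integral_horizontal_le:
  assumes cont: "continuous_on right_half_plane g" and h: "0 < h"
    and u: "u1 < u2" "0 < u1" "x - h \<le> u1" "u2 \<le> x + h" and yy: "h/2 \<le> \<bar>yy - y\<bar>"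
  shows "ennreal (cmod (contour_integral (linepath (Complex u1 yy) (Complex u2 yy)) (\<lambda>w. g w / (w - Complex x y))))
     \<le> ennreal (2/h) * (\<integral>\<^sup>+s. indicator {x-h..x+h} s * ennreal (rhp_norm g (Complex s yy)) \<partial>lborel)"
proof -
  let ?a = "Complex u1 yy" and ?b = "Complex u2 yy"
  note [measurable] = rhp_norm_measurable[OF cont]
  have segeq: "closed_segment ?a ?b = {w. Im w = yy \<and> Re w \<in> {u1..u2}}"
    using u by (simp add: closed_segment_same_Im closed_segment_eq_real_ivl)
  have "ennreal (cmod (contour_integral (linepath ?a ?b) (\<lambda>w. g w / (w - Complex x y))))
     \<le> ennreal (cmod (?b - ?a) / (h/2)) * (\<integral>\<^sup>+t. indicator {0..1} t * ennreal (rhp_norm g (linepath ?a ?b t)) \<partial>lborel)"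
  proof (rule norm_contour_integral_linepath_cauchy_le[OF cont])
    fix w assume "w \<in> closed_segment ?a ?b"
    then show "h/2 \<le> cmod (w - Complex x y)"
      using abs_Im_le_cmod[of "w - Complex x y"] yy unfolding segeq by auto
  qed (use u h in \<open>auto simp: segeq right_half_plane_def\<close>)
  also have "\<dots> = ennreal (2/h) * (ennreal (u2 - u1) * (\<integral>\<^sup>+t. indicator {0..1} t * ennreal (rhp_norm g (Complex (u1 + t * (u2 - u1)) yy)) \<partial>lborel))"
  proof -
    have lp: "linepath ?a ?b t = Complex (u1 + t * (u2 - u1)) yy" for t
      by (simp add: linepath_def complex_eq_iff algebra_simps)
    have "cmod (?b - ?a) / (h/2) = 2/h * (u2 - u1)" using u by (simp add: cmod_def)
    then have "ennreal (cmod (?b - ?a) / (h/2)) = ennreal (2/h) * ennreal (u2 - u1)"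
      using h by (metis ennreal_mult' divide_nonneg_pos zero_le_numeral)
    then show ?thesis unfolding lp by (simp only: mult.assoc)
  qed
  also have "\<dots> = ennreal (2/h) * (\<integral>\<^sup>+s. indicator {u1..u2} s * ennreal (rhp_norm g (Complex s yy)) \<partial>lborel)"
    using nn_integral_Icc_affine_unit[of "\<lambda>s. ennreal (rhp_norm g (Complex s yy))", OF _ u(1)] by simp
  also have "\<dots> \<le> ennreal (2/h) * (\<integral>\<^sup>+s. indicator {x-h..x+h} s * ennreal (rhp_norm g (Complex s yy)) \<partial>lborel)"
    using u by (intro mult_left_mono nn_integral_mono) (auto simp: indicator_def)
  finally show ?thesis .
qed

lemma norm_contour_integral_vertical_le:
  assumes cont: "continuous_on right_half_plane g" and h: "0 < h"
    and v: "v1 < v2" "y - h \<le> v1" "v2 \<le> y + h" and xx: "h/2 \<le> \<bar>xx - x\<bar>" "0 < xx"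
  shows "ennreal (cmod (contour_integral (linepath (Complex xx v1) (Complex xx v2)) (\<lambda>w. g w / (w - Complex x y))))
     \<le> ennreal (2/h) * (\<integral>\<^sup>+t. indicator {y-h..y+h} t * ennreal (rhp_norm g (Complex xx t)) \<partial>lborel)"
proof -
  let ?a = "Complex xx v1" and ?b = "Complex xx v2"
  note [measurable] = rhp_norm_measurable[OF cont]
  have segeq: "closed_segment ?a ?b = {w. Re w = xx \<and> Im w \<in> {v1..v2}}"
    using v by (simp add: closed_segment_same_Re closed_segment_eq_real_ivl)
  have "ennreal (cmod (contour_integral (linepath ?a ?b) (\<lambda>w. g w / (w - Complex x y))))
     \<le> ennreal (cmod (?b - ?a) / (h/2)) * (\<integral>\<^sup>+t. indicator {0..1} t * ennreal (rhp_norm g (linepath ?a ?b t)) \<partial>lborel)"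
  proof (rule norm_contour_integral_linepath_cauchy_le[OF cont])
    fix w assume "w \<in> closed_segment ?a ?b"
    then show "h/2 \<le> cmod (w - Complex x y)"
      using abs_Re_le_cmod[of "w - Complex x y"] xx unfolding segeq by auto
  qed (use xx h in \<open>auto simp: segeq right_half_plane_def\<close>)
  also have "\<dots> = ennreal (2/h) * (ennreal (v2 - v1) * (\<integral>\<^sup>+t. indicator {0..1} t * ennreal (rhp_norm g (Complex xx (v1 + t * (v2 - v1)))) \<partial>lborel))"
  proof -
    have lp: "linepath ?a ?b t = Complex xx (v1 + t * (v2 - v1))" for t
      by (simp add: linepath_def complex_eq_iff algebra_simps)
    have "cmod (?b - ?a) / (h/2) = 2/h * (v2 - v1)" using v by (simp add: cmod_def)
    then have "ennreal (cmod (?b - ?a) / (h/2)) = ennreal (2/h) * ennreal (v2 - v1)"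
      using h by (metis ennreal_mult' divide_nonneg_pos zero_le_numeral)
    then show ?thesis unfolding lp by (simp only: mult.assoc)
  qed
  also have "\<dots> = ennreal (2/h) * (\<integral>\<^sup>+t. indicator {v1..v2} t * ennreal (rhp_norm g (Complex xx t)) \<partial>lborel)"
    using nn_integral_Icc_affine_unit[of "\<lambda>t. ennreal (rhp_norm g (Complex xx t))", OF _ v(1)] by simp
  also have "\<dots> \<le> ennreal (2/h) * (\<integral>\<^sup>+t. indicator {y-h..y+h} t * ennreal (rhp_norm g (Complex xx t)) \<partial>lborel)"
    using v by (intro mult_left_mono nn_integral_mono) (auto simp: indicator_def)
  finally show ?thesis .
qed

lemma norm_le_rectpath_sides:
  assumes holo: "g holomorphic_on right_half_plane" and a: "0 < Re a" and z: "z \<in> box a c"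
  defines "k \<equiv> \<lambda>w. g w / (w - z)" and "b \<equiv> Complex (Re c) (Im a)" and "d \<equiv> Complex (Re a) (Im c)"
  shows "2 * pi * cmod (g z) \<le> cmod (contour_integral (linepath a b) k) + cmod (contour_integral (linepath b c) k)
      + cmod (contour_integral (linepath d c) k) + cmod (contour_integral (linepath a d) k)"
proof -
  have cont: "continuous_on right_half_plane g" using holo holomorphic_on_imp_continuous_on by blast
  have rp: "rectpath a c = linepath a b +++ linepath b c +++ linepath c d +++ linepath d a"
    by (simp add: rectpath_def Let_def b_def d_def)
  have "Re a \<le> Re c" "Im a \<le> Im c" using z by (auto simp: in_box_complex_iff)
  then have path_image: "path_image (rectpath a c) \<subseteq> right_half_plane - {z}"
    using path_image_rectpath_cbox_minus_box a z by (auto simp: in_cbox_complex_iff right_half_plane_def)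
  have "(k has_contour_integral (2 * pi * \<i> * winding_number (rectpath a c) z * g z)) (rectpath a c)"
    unfolding k_def
  proof (rule Cauchy_integral_formula_convex_simple[OF _ holo])
    show "convex right_half_plane" unfolding right_half_plane_def by (rule convex_halfspace_Re_gt)
    show "z \<in> interior right_half_plane"
      using a z open_right_half_plane by (auto simp: interior_open right_half_plane_def in_box_complex_iff)
  qed (use path_image in auto)
  then have cauchy: "contour_integral (rectpath a c) k = 2 * pi * \<i> * g z"
    using winding_number_rectpath[OF z] by (simp add: contour_integral_unique)
  have "continuous_on (right_half_plane - {z}) k" unfolding k_def
    by (intro continuous_intros continuous_on_subset[OF cont]) auto
  then have "k contour_integrable_on linepath a b" "k contour_integrable_on linepath b c"
    "k contour_integrable_on linepath c d" "k contour_integrable_on linepath d a"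
    using path_image unfolding rp
    by (auto simp: path_image_join intro!: contour_integrable_continuous_linepath elim!: continuous_on_subset)
  then have sides: "contour_integral (rectpath a c) k = contour_integral (linepath a b) k
      + contour_integral (linepath b c) k - contour_integral (linepath d c) k - contour_integral (linepath a d) k"
    unfolding rp using contour_integral_reversepath[of "linepath d c" k] contour_integral_reversepath[of "linepath a d" k]
    by (simp add: contour_integrable_joinI)
  have "2 * pi * cmod (g z) = cmod (contour_integral (rectpath a c) k)"
    unfolding cauchy by (simp add: norm_mult)
  also have "\<dots> \<le> cmod (contour_integral (linepath a b) k) + cmod (contour_integral (linepath b c) k)
      + cmod (contour_integral (linepath d c) k) + cmod (contour_integral (linepath a d) k)"
    unfolding sides by (intro norm_triangle_le_diff add_mono norm_triangle_ineq order.refl)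
  finally show ?thesis .
qed

lemma norm_le_rectangle_side_integrals:
  assumes holo: "g holomorphic_on right_half_plane" and h: "0 < h" "h < x"
    and x1: "x - h \<le> x1" "x1 \<le> x - h/2" and x2: "x + h/2 \<le> x2" "x2 \<le> x + h"
    and y1: "y - h \<le> y1" "y1 \<le> y - h/2" and y2: "y + h/2 \<le> y2" "y2 \<le> y + h"
  shows "ennreal (2 * pi * cmod (g (Complex x y))) \<le> ennreal (2/h) *
     ((\<integral>\<^sup>+s. indicator {x-h..x+h} s * ennreal (rhp_norm g (Complex s y1)) \<partial>lborel)
    + (\<integral>\<^sup>+s. indicator {x-h..x+h} s * ennreal (rhp_norm g (Complex s y2)) \<partial>lborel)
    + (\<integral>\<^sup>+t. indicator {y-h..y+h} t * ennreal (rhp_norm g (Complex x1 t)) \<partial>lborel)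
    + (\<integral>\<^sup>+t. indicator {y-h..y+h} t * ennreal (rhp_norm g (Complex x2 t)) \<partial>lborel))"
proof -
  have cont: "continuous_on right_half_plane g" using holo holomorphic_on_imp_continuous_on by blast
  let ?k = "\<lambda>w. g w / (w - Complex x y)"
  have "2 * pi * cmod (g (Complex x y))
      \<le> cmod (contour_integral (linepath (Complex x1 y1) (Complex x2 y1)) ?k)
       + cmod (contour_integral (linepath (Complex x2 y1) (Complex x2 y2)) ?k)
       + cmod (contour_integral (linepath (Complex x1 y2) (Complex x2 y2)) ?k)
       + cmod (contour_integral (linepath (Complex x1 y1) (Complex x1 y2)) ?k)"
    using norm_le_rectpath_sides[OF holo, of "Complex x1 y1" "Complex x y" "Complex x2 y2"] h x1 x2 y1 y2
    by (simp add: in_box_complex_iff)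
  then have "ennreal (2 * pi * cmod (g (Complex x y)))
      \<le> ennreal (cmod (contour_integral (linepath (Complex x1 y1) (Complex x2 y1)) ?k))
       + ennreal (cmod (contour_integral (linepath (Complex x2 y1) (Complex x2 y2)) ?k))
       + ennreal (cmod (contour_integral (linepath (Complex x1 y2) (Complex x2 y2)) ?k))
       + ennreal (cmod (contour_integral (linepath (Complex x1 y1) (Complex x1 y2)) ?k))"
    by (simp add: ennreal_plus[symmetric] del: ennreal_plus)
  also have "\<dots> \<le> ennreal (2/h) * (\<integral>\<^sup>+s. indicator {x-h..x+h} s * ennreal (rhp_norm g (Complex s y1)) \<partial>lborel)
      + ennreal (2/h) * (\<integral>\<^sup>+t. indicator {y-h..y+h} t * ennreal (rhp_norm g (Complex x2 t)) \<partial>lborel)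
      + ennreal (2/h) * (\<integral>\<^sup>+s. indicator {x-h..x+h} s * ennreal (rhp_norm g (Complex s y2)) \<partial>lborel)
      + ennreal (2/h) * (\<integral>\<^sup>+t. indicator {y-h..y+h} t * ennreal (rhp_norm g (Complex x1 t)) \<partial>lborel)"
    using h x1 x2 y1 y2
    by (intro add_mono norm_contour_integral_horizontal_le[OF cont] norm_contour_integral_vertical_le[OF cont]) auto
  finally show ?thesis by (simp add: distrib_left add_ac)
qed

lemma nn_integral_rhp_norm_swap:
  assumes "continuous_on right_half_plane g"
  shows "(\<integral>\<^sup>+t. indicator {c..d} t * (\<integral>\<^sup>+s. indicator {a..b} s * ennreal (rhp_norm g (Complex s t)) \<partial>lborel) \<partial>lborel)
       = (\<integral>\<^sup>+s. indicator {a..b} s * (\<integral>\<^sup>+t. indicator {c..d} t * ennreal (rhp_norm g (Complex s t)) \<partial>lborel) \<partial>lborel)"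
proof -
  note [measurable] = rhp_norm_measurable[OF assms]
  have "(\<integral>\<^sup>+t. indicator {c..d} t * (\<integral>\<^sup>+s. indicator {a..b} s * ennreal (rhp_norm g (Complex s t)) \<partial>lborel) \<partial>lborel)
      = (\<integral>\<^sup>+t. (\<integral>\<^sup>+s. indicator {c..d} t * (indicator {a..b} s * ennreal (rhp_norm g (Complex s t))) \<partial>lborel) \<partial>lborel)"
    by (intro nn_integral_cong nn_integral_cmult[symmetric]) measurable
  also have "\<dots> = (\<integral>\<^sup>+s. (\<integral>\<^sup>+t. indicator {c..d} t * (indicator {a..b} s * ennreal (rhp_norm g (Complex s t))) \<partial>lborel) \<partial>lborel)"
    by (rule lborel_pair.Fubini') measurable
  also have "\<dots> = (\<integral>\<^sup>+s. indicator {a..b} s * (\<integral>\<^sup>+t. indicator {c..d} t * ennreal (rhp_norm g (Complex s t)) \<partial>lborel) \<partial>lborel)"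
    by (intro nn_integral_cong) (subst nn_integral_cmult[symmetric], measurable, simp add: mult.left_commute)
  finally show ?thesis .
qed

text \<open>Cauchy's formula on a rectangle inside the square of half-side \<open>h\<close>, whose sides are chosen
  in the outer halves of the square where the line integrals of \<open>\<bar>g\<bar>\<close> do not exceed their mean.\<close>

lemma norm_le_square_integral:
  assumes holo: "g holomorphic_on right_half_plane" and h: "0 < h" "h < x"
  shows "ennreal (cmod (g (Complex x y))) \<le> ennreal (8 / (pi * h\<^sup>2)) *
     (\<integral>\<^sup>+s. indicator {x-h..x+h} s * (\<integral>\<^sup>+t. indicator {y-h..y+h} t * ennreal (rhp_norm g (Complex s t)) \<partial>lborel) \<partial>lborel)"
    (is "_ \<le> _ * ?Box")
proof -
  have cont: "continuous_on right_half_plane g" using holo holomorphic_on_imp_continuous_on by blast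
  note [measurable] = rhp_norm_measurable[OF cont]
  define Hb where "Hb = (\<lambda>v. \<integral>\<^sup>+s. indicator {x-h..x+h} s * ennreal (rhp_norm g (Complex s v)) \<partial>lborel)"
  define Hv where "Hv = (\<lambda>u. \<integral>\<^sup>+t. indicator {y-h..y+h} t * ennreal (rhp_norm g (Complex u t)) \<partial>lborel)"
  have [measurable]: "Hb \<in> borel_measurable borel" "Hv \<in> borel_measurable borel"
    unfolding Hb_def Hv_def by measurable
  have Hb_average: "(\<integral>\<^sup>+v. indicator {y-h..y+h} v * Hb v \<partial>lborel) = ?Box"
    unfolding Hb_def by (rule nn_integral_rhp_norm_swap[OF cont])
  have Hv_average: "(\<integral>\<^sup>+u. indicator {x-h..x+h} u * Hv u \<partial>lborel) = ?Box"
    unfolding Hv_def ..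
  obtain y1 where y1: "y - h \<le> y1" "y1 \<le> y - h/2" "Hb y1 * ennreal (h/2) \<le> ?Box"
    using exists_le_average_subinterval[of Hb "h/2" "y-h" "y-h" "y+h"] h Hb_average by auto
  obtain y2 where y2: "y + h/2 \<le> y2" "y2 \<le> y + h" "Hb y2 * ennreal (h/2) \<le> ?Box"
    using exists_le_average_subinterval[of Hb "h/2" "y-h" "y+h/2" "y+h"] h Hb_average by auto
  obtain x1 where x1: "x - h \<le> x1" "x1 \<le> x - h/2" "Hv x1 * ennreal (h/2) \<le> ?Box"
    using exists_le_average_subinterval[of Hv "h/2" "x-h" "x-h" "x+h"] h Hv_average by auto
  obtain x2 where x2: "x + h/2 \<le> x2" "x2 \<le> x + h" "Hv x2 * ennreal (h/2) \<le> ?Box"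
    using exists_le_average_subinterval[of Hv "h/2" "x-h" "x+h/2" "x+h"] h Hv_average by auto
  have "ennreal (2 * pi * cmod (g (Complex x y))) * ennreal (h/2)
      \<le> ennreal (2/h) * (Hb y1 + Hb y2 + Hv x1 + Hv x2) * ennreal (h/2)"
    unfolding Hb_def Hv_def using x1 x2 y1 y2 h
    by (intro mult_right_mono norm_le_rectangle_side_integrals[OF holo]) auto
  also have "\<dots> = ennreal (2/h) * (Hb y1 * ennreal (h/2) + Hb y2 * ennreal (h/2) + Hv x1 * ennreal (h/2) + Hv x2 * ennreal (h/2))"
    by (simp add: distrib_right mult.assoc)
  also have "\<dots> \<le> ennreal (2/h) * (?Box + ?Box + ?Box + ?Box)"
    using x1 x2 y1 y2 by (intro mult_left_mono add_mono) auto
  also have "\<dots> = ennreal (2/h) * (4 * ?Box)"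
  proof -
    have "(4::ennreal) = 1 + 1 + 1 + 1" by simp
    then show ?thesis by (simp only: distrib_right mult_1)
  qed
  finally have rect: "ennreal (2 * pi * cmod (g (Complex x y))) * ennreal (h/2) \<le> ennreal (2/h) * (4 * ?Box)" .
  have "ennreal (cmod (g (Complex x y))) = ennreal (1/(pi*h)) * (ennreal (2 * pi * cmod (g (Complex x y))) * ennreal (h/2))"
    using h by (simp add: ennreal_mult'[symmetric] ennreal_mult[symmetric] field_simps)
  also have "\<dots> \<le> ennreal (1/(pi*h)) * (ennreal (2/h) * (4 * ?Box))"
    using rect by (rule mult_left_mono) simp
  also have "\<dots> = ennreal (1/(pi*h) * (2/h * 4)) * ?Box"
  proof -
    have "ennreal (1/(pi*h) * (2/h * 4)) = ennreal (1/(pi*h)) * ennreal (2/h * 4)"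
      by (rule ennreal_mult) (use h in auto)
    moreover have "ennreal (2/h * 4) = ennreal (2/h) * 4"
      using ennreal_mult[of "2/h" 4] h by simp
    ultimately show ?thesis by (simp only: mult.assoc)
  qed
  also have "1/(pi*h) * (2/h * 4) = 8 / (pi * h\<^sup>2)"
    using h by (simp add: field_simps power2_eq_square)
  finally show ?thesis .
qed

lemma sqnorm_le_square_integral:
  assumes holo: "f holomorphic_on right_half_plane" and h: "0 < h" "h < x"
  shows "ennreal ((rhp_norm f (Complex x y))\<^sup>2) \<le> ennreal (8 / (pi * h\<^sup>2)) *
     (\<integral>\<^sup>+s. indicator {x-h..x+h} s * (\<integral>\<^sup>+t. indicator {-h..h} (t - y) * ennreal ((rhp_norm f (Complex s t))\<^sup>2) \<partial>lborel) \<partial>lborel)"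
proof -
  have sq: "rhp_norm (\<lambda>z. (f z)\<^sup>2) z = (rhp_norm f z)\<^sup>2" for z
    by (simp add: rhp_norm_def norm_power)
  have inner: "(\<integral>\<^sup>+t. indicator {y-h..y+h} t * ennreal (rhp_norm (\<lambda>z. (f z)\<^sup>2) (Complex s t)) \<partial>lborel)
      = (\<integral>\<^sup>+t. indicator {-h..h} (t - y) * ennreal ((rhp_norm f (Complex s t))\<^sup>2) \<partial>lborel)" for s
    unfolding sq by (intro nn_integral_cong) (auto simp: indicator_def)
  have holo2: "(\<lambda>z. (f z)\<^sup>2) holomorphic_on right_half_plane"
    using holo by (intro holomorphic_intros)
  have "ennreal ((rhp_norm f (Complex x y))\<^sup>2) = ennreal (cmod ((\<lambda>z. (f z)\<^sup>2) (Complex x y)))"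
    using h by (simp add: rhp_norm_def norm_power)
  also have "\<dots> \<le> ennreal (8 / (pi * h\<^sup>2)) * (\<integral>\<^sup>+s. indicator {x-h..x+h} s *
      (\<integral>\<^sup>+t. indicator {y-h..y+h} t * ennreal (rhp_norm (\<lambda>z. (f z)\<^sup>2) (Complex s t)) \<partial>lborel) \<partial>lborel)"
    by (rule norm_le_square_integral[OF holo2 h])
  finally show ?thesis unfolding inner .
qed

text \<open>Integrate the sub-mean-value inequality for \<open>f\<^sup>2\<close> along the line \<open>Re z = x\<close>: by Fubini,
  every point of the strip \<open>\<bar>Re z - x\<bar> \<le> h\<close> lies in the squares of a set of centres of length \<open>2h\<close>.\<close>

lemma vertical_sqnorm_le_local_average:
  assumes holo: "f holomorphic_on right_half_plane" and h: "0 < h" "h < x"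
  shows "vertical_sqnorm f x
      \<le> ennreal (16 / (pi * h)) * (\<integral>\<^sup>+s. indicator {x-h..x+h} s * vertical_sqnorm f s \<partial>lborel)"
proof -
  have cont: "continuous_on right_half_plane f" using holo holomorphic_on_imp_continuous_on by blast
  note [measurable] = rhp_norm_measurable[OF cont] vertical_sqnorm_measurable[OF cont]
  define F where "F s t = ennreal ((rhp_norm f (Complex s t))\<^sup>2)" for s t
  have [measurable (raw)]: "\<And>(M::'z measure) a b. a \<in> borel_measurable M \<Longrightarrow> b \<in> borel_measurable M
      \<Longrightarrow> (\<lambda>x. F (a x) (b x)) \<in> borel_measurable M"
    unfolding F_def by measurable
  have "vertical_sqnorm f x \<le> (\<integral>\<^sup>+y. ennreal (8 / (pi * h\<^sup>2)) *
      (\<integral>\<^sup>+s. indicator {x-h..x+h} s * (\<integral>\<^sup>+t. indicator {-h..h} (t - y) * F s t \<partial>lborel) \<partial>lborel) \<partial>lborel)"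
    unfolding vertical_sqnorm_def F_def by (intro nn_integral_mono sqnorm_le_square_integral holo h)
  also have "\<dots> = ennreal (8 / (pi * h\<^sup>2)) *
      (\<integral>\<^sup>+y. (\<integral>\<^sup>+s. indicator {x-h..x+h} s * (\<integral>\<^sup>+t. indicator {-h..h} (t - y) * F s t \<partial>lborel) \<partial>lborel) \<partial>lborel)"
    by (rule nn_integral_cmult) measurable
  also have "(\<integral>\<^sup>+y. (\<integral>\<^sup>+s. indicator {x-h..x+h} s * (\<integral>\<^sup>+t. indicator {-h..h} (t - y) * F s t \<partial>lborel) \<partial>lborel) \<partial>lborel)
      = (\<integral>\<^sup>+s. (\<integral>\<^sup>+y. indicator {x-h..x+h} s * (\<integral>\<^sup>+t. indicator {-h..h} (t - y) * F s t \<partial>lborel) \<partial>lborel) \<partial>lborel)"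
    by (rule lborel_pair.Fubini') measurable
  also have "\<dots> = (\<integral>\<^sup>+s. indicator {x-h..x+h} s * (ennreal (2 * h) * vertical_sqnorm f s) \<partial>lborel)"
    using h unfolding vertical_sqnorm_def F_def by (simp add: nn_integral_cmult nn_integral_window)
  also have "\<dots> = ennreal (2 * h) * (\<integral>\<^sup>+s. indicator {x-h..x+h} s * vertical_sqnorm f s \<partial>lborel)"
    by (subst nn_integral_cmult[symmetric]) (measurable, simp add: mult.left_commute)
  finally have "vertical_sqnorm f x \<le> ennreal (8 / (pi * h\<^sup>2)) *
      (ennreal (2 * h) * (\<integral>\<^sup>+s. indicator {x-h..x+h} s * vertical_sqnorm f s \<partial>lborel))" .
  moreover have "ennreal (8 / (pi * h\<^sup>2)) * ennreal (2 * h) = ennreal (16 / (pi * h))"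
    using h by (simp add: ennreal_mult'[symmetric] power2_eq_square field_simps)
  ultimately show ?thesis by (metis mult.assoc)
qed

section \<open>Bounds for shifted norms\<close>

lemma shifted_sqnorm_le_nonneg_exponent:
  assumes "0 \<le> \<alpha>" "0 \<le> r"
  shows "shifted_sqnorm \<alpha> f r \<le> shifted_sqnorm \<alpha> f 0"
  unfolding shifted_sqnorm_def
proof (rule nn_integral_mono)
  fix x
  have "indicator {r<..} x * (x - r) powr \<alpha> \<le> indicator {0<..} x * (x - 0) powr \<alpha>"
    using assms by (auto simp: indicator_def intro!: powr_mono2)
  then show "ennreal (indicator {r<..} x * (x - r) powr \<alpha>) * vertical_sqnorm f x
      \<le> ennreal (indicator {0<..} x * (x - 0) powr \<alpha>) * vertical_sqnorm f x"
    by (intro mult_right_mono ennreal_leI) auto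
qed

lemma nn_integral_vertical_sqnorm_le_shifted_sqnorm:
  assumes cont: "continuous_on right_half_plane f" and "\<alpha> \<le> 0" "0 < c"
  shows "(\<integral>\<^sup>+s. indicator {c..d} s * vertical_sqnorm f s \<partial>lborel)
      \<le> ennreal (d powr (-\<alpha>)) * shifted_sqnorm \<alpha> f 0"
proof -
  note [measurable] = vertical_sqnorm_measurable[OF cont]
  have "indicator {c..d} s * vertical_sqnorm f s
      \<le> ennreal (d powr (-\<alpha>)) * (ennreal (indicator {0<..} s * (s - 0) powr \<alpha>) * vertical_sqnorm f s)" for s
  proof (cases "s \<in> {c..d}")
    case True
    then have "d powr (-\<alpha>) * d powr \<alpha> \<le> d powr (-\<alpha>) * s powr \<alpha>"
      using assms by (intro mult_left_mono powr_mono2') auto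
    moreover have "d powr (-\<alpha>) * d powr \<alpha> = 1" using True assms by (simp flip: powr_add)
    ultimately have "ennreal 1 \<le> ennreal (d powr (-\<alpha>)) * ennreal (indicator {0<..} s * (s - 0) powr \<alpha>)"
      using True assms by (simp add: ennreal_mult'[symmetric] ennreal_leI)
    from mult_right_mono[OF this, of "vertical_sqnorm f s"] show ?thesis
      using True by (simp add: mult.assoc)
  qed simp
  then show ?thesis
    unfolding shifted_sqnorm_def by (subst nn_integral_cmult[symmetric]) (measurable, intro nn_integral_mono)
qed

lemma vertical_sqnorm_le_shifted_sqnorm:
  assumes holo: "f holomorphic_on right_half_plane" and "\<alpha> \<le> 0" "0 < r" "r < x" "x < 2 * r"
  shows "vertical_sqnorm f x \<le> ennreal (32 / (pi * r) * (5 * r / 2) powr (-\<alpha>)) * shifted_sqnorm \<alpha> f 0"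
proof -
  have cont: "continuous_on right_half_plane f" using holo holomorphic_on_imp_continuous_on by blast
  have "vertical_sqnorm f x
      \<le> ennreal (16 / (pi * (r/2))) * (\<integral>\<^sup>+s. indicator {x - r/2..x + r/2} s * vertical_sqnorm f s \<partial>lborel)"
    using assms by (intro vertical_sqnorm_le_local_average) auto
  also have "\<dots> \<le> ennreal (16 / (pi * (r/2))) * (\<integral>\<^sup>+s. indicator {r/2..5 * r / 2} s * vertical_sqnorm f s \<partial>lborel)"
    using assms by (intro mult_left_mono nn_integral_mono mult_right_mono) (auto simp: indicator_def)
  also have "\<dots> \<le> ennreal (16 / (pi * (r/2))) * (ennreal ((5 * r / 2) powr (-\<alpha>)) * shifted_sqnorm \<alpha> f 0)"
    using assms by (intro mult_left_mono nn_integral_vertical_sqnorm_le_shifted_sqnorm[OF cont]) auto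
  also have "\<dots> = ennreal (32 / (pi * r) * (5 * r / 2) powr (-\<alpha>)) * shifted_sqnorm \<alpha> f 0"
    using assms by (simp add: mult.assoc[symmetric] ennreal_mult'[symmetric])
  finally show ?thesis .
qed

text \<open>For \<open>\<alpha> < 0\<close> the weight \<open>(x - r) powr \<alpha>\<close> is singular at \<open>x = r\<close>; there the local average
  bound controls \<open>vertical_sqnorm f\<close> by \<open>shifted_sqnorm \<alpha> f 0\<close>, while for \<open>x \<ge> 2r\<close> the weight is
  at most \<open>2 powr (-\<alpha>)\<close> times the unshifted one.\<close>

lemma shifted_sqnorm_integrand_le:
  assumes "\<alpha> < 0" and holo: "f holomorphic_on right_half_plane" and r: "0 < r"
  shows "ennreal (indicator {r<..} x * (x - r) powr \<alpha>) * vertical_sqnorm f x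
      \<le> ennreal (2 powr (-\<alpha>)) * (ennreal (indicator {0<..} x * (x - 0) powr \<alpha>) * vertical_sqnorm f x)
       + ennreal (indicator {r<..<2*r} x * (x - r) powr \<alpha>)
         * (ennreal (32 / (pi * r) * (5 * r / 2) powr (-\<alpha>)) * shifted_sqnorm \<alpha> f 0)"
    (is "_ \<le> ?A + ?B")
proof -
  consider "x \<le> r" | "2 * r \<le> x" | "r < x" "x < 2 * r" by linarith
  then show ?thesis
  proof cases
    case 2
    then have "(x - r) powr \<alpha> \<le> (x / 2) powr \<alpha>" using r assms by (intro powr_mono2') auto
    also have "\<dots> = 2 powr (-\<alpha>) * x powr \<alpha>"
      using 2 r by (simp add: powr_divide powr_minus_divide)
    finally have "ennreal (indicator {r<..} x * (x - r) powr \<alpha>)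
        \<le> ennreal (2 powr (-\<alpha>)) * ennreal (indicator {0<..} x * (x - 0) powr \<alpha>)"
      using 2 r by (simp add: ennreal_mult'[symmetric] ennreal_leI)
    then have "ennreal (indicator {r<..} x * (x - r) powr \<alpha>) * vertical_sqnorm f x \<le> ?A"
      by (simp add: mult.assoc[symmetric] mult_right_mono)
    then show ?thesis by (simp add: add_increasing2)
  next
    case 3
    have "vertical_sqnorm f x \<le> ennreal (32 / (pi * r) * (5 * r / 2) powr (-\<alpha>)) * shifted_sqnorm \<alpha> f 0"
      using 3 r assms by (intro vertical_sqnorm_le_shifted_sqnorm[OF holo]) auto
    then have "ennreal (indicator {r<..} x * (x - r) powr \<alpha>) * vertical_sqnorm f x \<le> ?B"
      using 3 by (simp add: mult_left_mono)
    then show ?thesis by (simp add: add_increasing)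
  qed simp
qed

lemma shifted_sqnorm_le_neg_exponent:
  assumes "-1 < \<alpha>" "\<alpha> < 0" and holo: "f holomorphic_on right_half_plane" and r: "0 < r"
  shows "shifted_sqnorm \<alpha> f r
      \<le> ennreal (2 powr (-\<alpha>) + 32 * (5/2) powr (-\<alpha>) / (pi * (\<alpha> + 1))) * shifted_sqnorm \<alpha> f 0"
proof -
  have cont: "continuous_on right_half_plane f" using holo holomorphic_on_imp_continuous_on by blast
  note [measurable] = vertical_sqnorm_measurable[OF cont]
  define C where "C = 32 / (pi * r) * (5 * r / 2) powr (-\<alpha>)"
  define A where "A x = ennreal (2 powr (-\<alpha>)) * (ennreal (indicator {0<..} x * (x - 0) powr \<alpha>) * vertical_sqnorm f x)" for x
  define B where "B x = ennreal (indicator {r<..<2*r} x * (x - r) powr \<alpha>) * (ennreal C * shifted_sqnorm \<alpha> f 0)" for x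
  have split: "ennreal (indicator {r<..} x * (x - r) powr \<alpha>) * vertical_sqnorm f x \<le> A x + B x" for x
    unfolding A_def B_def C_def using shifted_sqnorm_integrand_le[OF assms(2) holo r] .
  have "shifted_sqnorm \<alpha> f r \<le> (\<integral>\<^sup>+x. A x + B x \<partial>lborel)"
    unfolding shifted_sqnorm_def by (intro nn_integral_mono split)
  also have "\<dots> = ennreal (2 powr (-\<alpha>)) * shifted_sqnorm \<alpha> f 0
      + (\<integral>\<^sup>+x. ennreal (indicator {r<..<2*r} x * (x - r) powr \<alpha>) \<partial>lborel) * (ennreal C * shifted_sqnorm \<alpha> f 0)"
    unfolding A_def B_def shifted_sqnorm_def
    by (simp add: nn_integral_add nn_integral_cmult nn_integral_multc)
  also have "\<dots> \<le> ennreal (2 powr (-\<alpha>)) * shifted_sqnorm \<alpha> f 0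
      + ennreal (r powr (\<alpha> + 1) / (\<alpha> + 1)) * (ennreal C * shifted_sqnorm \<alpha> f 0)"
    using assms by (intro add_left_mono mult_right_mono nn_integral_shifted_powr_le) auto
  finally have bound: "shifted_sqnorm \<alpha> f r \<le> ennreal (2 powr (-\<alpha>)) * shifted_sqnorm \<alpha> f 0
      + ennreal (r powr (\<alpha> + 1) / (\<alpha> + 1)) * (ennreal C * shifted_sqnorm \<alpha> f 0)" .
  have const: "r powr (\<alpha> + 1) / (\<alpha> + 1) * C = 32 * (5/2) powr (-\<alpha>) / (pi * (\<alpha> + 1))"
  proof -
    have "\<alpha> + 1 \<noteq> 0" using assms(1) by simp
    have split_powr: "(5 * r / 2) powr (-\<alpha>) = (5/2) powr (-\<alpha>) * r powr (-\<alpha>)"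
      using r powr_mult[of "5/2" r "-\<alpha>"] by simp
    have cancel: "r powr (\<alpha> + 1) * r powr (-\<alpha>) = r" using r by (simp flip: powr_add)
    have "r powr (\<alpha> + 1) / (\<alpha> + 1) * C
        = (r powr (\<alpha> + 1) * r powr (-\<alpha>)) * (32 * (5/2) powr (-\<alpha>)) / ((\<alpha> + 1) * (pi * r))"
      unfolding C_def split_powr using r \<open>\<alpha> + 1 \<noteq> 0\<close> by (simp add: field_simps)
    also have "\<dots> = r * (32 * (5/2) powr (-\<alpha>)) / (r * (pi * (\<alpha> + 1)))"
      unfolding cancel by (simp add: ac_simps)
    also have "\<dots> = 32 * (5/2) powr (-\<alpha>) / (pi * (\<alpha> + 1))"
      using r by (intro nonzero_mult_divide_mult_cancel_left) simp
    finally show ?thesis .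
  qed
  have "ennreal (r powr (\<alpha> + 1) / (\<alpha> + 1)) * ennreal C = ennreal (32 * (5/2) powr (-\<alpha>) / (pi * (\<alpha> + 1)))"
    unfolding const[symmetric] using assms(1) r by (intro ennreal_mult[symmetric]) (auto simp: C_def)
  then show ?thesis
    using bound assms(1) by (simp add: distrib_right mult.assoc[symmetric])
qed

lemma shifted_sqnorm_le_const:
  assumes "-1 < \<alpha>" "f holomorphic_on right_half_plane"
  obtains K where "\<And>r. 0 \<le> r \<Longrightarrow> shifted_sqnorm \<alpha> f r \<le> ennreal K * shifted_sqnorm \<alpha> f 0"
proof (cases "0 \<le> \<alpha>")
  case True
  then show ?thesis using that[of 1] shifted_sqnorm_le_nonneg_exponent by simp
next
  case False
  define K where "K = 2 powr (-\<alpha>) + 32 * (5/2) powr (-\<alpha>) / (pi * (\<alpha> + 1))"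
  have "1 \<le> 2 powr (-\<alpha>)" using False by (intro ge_one_powr_ge_zero) auto
  moreover have "0 \<le> 32 * (5/2) powr (-\<alpha>) / (pi * (\<alpha> + 1))"
    using assms(1) by (intro divide_nonneg_pos) auto
  ultimately have "(1::ennreal) \<le> ennreal K"
    using ennreal_leI[of 1 K] unfolding K_def by simp
  have "shifted_sqnorm \<alpha> f r \<le> ennreal K * shifted_sqnorm \<alpha> f 0" if "0 \<le> r" for r
  proof (cases "r = 0")
    case True
    then show ?thesis
      using mult_right_mono[OF \<open>1 \<le> ennreal K\<close>, of "shifted_sqnorm \<alpha> f 0"] by simp
  next
    case False
    then show ?thesis
      using shifted_sqnorm_le_neg_exponent[OF assms(1) _ assms(2), of r] \<open>\<not> 0 \<le> \<alpha>\<close> that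
      unfolding K_def by simp
  qed
  then show ?thesis by (rule that)
qed

lemma vertical_sqnorm_bounded_below_near:
  assumes cont: "continuous_on right_half_plane f" and z0: "0 < Re z0" "f z0 \<noteq> 0"
  obtains \<rho> c where "0 < \<rho>" "0 < c" "\<And>x. \<bar>x - Re z0\<bar> \<le> \<rho> \<Longrightarrow> ennreal c \<le> vertical_sqnorm f x"
proof -
  have "isCont f z0"
    using cont open_right_half_plane z0 continuous_on_eq_continuous_at
    by (auto simp: right_half_plane_def)
  moreover have "0 < cmod (f z0) / 2" using z0 by simp
  ultimately obtain \<epsilon> where \<epsilon>: "0 < \<epsilon>" "\<And>z. dist z z0 < \<epsilon> \<Longrightarrow> dist (f z) (f z0) < cmod (f z0) / 2"
    unfolding continuous_at_eps_delta by blast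
  define \<rho> where "\<rho> = min (\<epsilon>/4) (Re z0 / 2)"
  define c0 where "c0 = (cmod (f z0) / 2)\<^sup>2"
  have \<rho>: "0 < \<rho>" "\<rho> \<le> \<epsilon>/4" "\<rho> < Re z0" using \<epsilon> z0 by (auto simp: \<rho>_def)
  have c0: "0 < c0" using z0 by (simp add: c0_def)
  have "ennreal (c0 * (2 * \<rho>)) \<le> vertical_sqnorm f x" if x: "\<bar>x - Re z0\<bar> \<le> \<rho>" for x
  proof -
    have "c0 \<le> (rhp_norm f (Complex x y))\<^sup>2" if y: "\<bar>y - Im z0\<bar> \<le> \<rho>" for y
    proof -
      have "dist (Complex x y) z0 \<le> \<bar>x - Re z0\<bar> + \<bar>y - Im z0\<bar>"
        using cmod_le[of "Complex x y - z0"] by (simp add: dist_norm)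
      also have "\<dots> < \<epsilon>" using x y \<rho> \<epsilon> by linarith
      finally have "cmod (f z0) / 2 \<le> cmod (f (Complex x y))"
        using \<epsilon>(2) norm_triangle_ineq2[of "f z0" "f (Complex x y)"]
        by (fastforce simp: dist_norm norm_minus_commute)
      moreover have "0 < x" using x \<rho> by linarith
      ultimately show ?thesis unfolding c0_def rhp_norm_def using z0
        by (auto intro!: power_mono)
    qed
    then have "(\<integral>\<^sup>+y. ennreal c0 * indicator {Im z0 - \<rho>..Im z0 + \<rho>} y \<partial>lborel) \<le> vertical_sqnorm f x"
      unfolding vertical_sqnorm_def
      by (intro nn_integral_mono) (auto simp: indicator_def ennreal_leI abs_le_iff)
    then show ?thesis using \<rho> c0 by (simp add: nn_integral_cmult_indicator ennreal_mult')
  qed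
  then show ?thesis using \<rho> c0 by (intro that[of \<rho> "c0 * (2 * \<rho>)"]) auto
qed

lemma shifted_sqnorm_bounded_below:
  assumes cont: "continuous_on right_half_plane f" and R: "0 \<le> R" and z0: "R < Re z0" "f z0 \<noteq> 0"
  obtains \<delta> where "0 < \<delta>" "\<And>r. 0 \<le> r \<Longrightarrow> r \<le> R \<Longrightarrow> ennreal \<delta> \<le> shifted_sqnorm \<alpha> f r"
proof -
  obtain \<rho>0 c where \<rho>0: "0 < \<rho>0" and c: "0 < c"
    and lower: "\<And>x. \<bar>x - Re z0\<bar> \<le> \<rho>0 \<Longrightarrow> ennreal c \<le> vertical_sqnorm f x"
    using vertical_sqnorm_bounded_below_near[OF cont] R z0 by (metis order.strict_trans1)
  define \<rho> where "\<rho> = min \<rho>0 ((Re z0 - R) / 2)"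
  have \<rho>: "0 < \<rho>" "\<rho> \<le> \<rho>0" "R < Re z0 - \<rho>" using \<rho>0 z0 by (auto simp: \<rho>_def min_def field_simps)
  define m where "m = min ((Re z0 - \<rho> - R) powr \<alpha>) ((Re z0 + \<rho>) powr \<alpha>)"
  have m: "0 < m" using \<rho> R by (simp add: m_def)
  have "ennreal (m * c * (2 * \<rho>)) \<le> shifted_sqnorm \<alpha> f r" if r: "0 \<le> r" "r \<le> R" for r
  proof -
    have "ennreal (m * c * (2 * \<rho>)) = (\<integral>\<^sup>+x. ennreal (m * c) * indicator {Re z0 - \<rho>..Re z0 + \<rho>} x \<partial>lborel)"
      using m c \<rho> by (simp add: nn_integral_cmult_indicator ennreal_mult')
    also have "\<dots> \<le> shifted_sqnorm \<alpha> f r"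
      unfolding shifted_sqnorm_def
    proof (intro nn_integral_mono)
      fix x
      show "ennreal (m * c) * indicator {Re z0 - \<rho>..Re z0 + \<rho>} x
          \<le> ennreal (indicator {r<..} x * (x - r) powr \<alpha>) * vertical_sqnorm f x"
      proof (cases "x \<in> {Re z0 - \<rho>..Re z0 + \<rho>}")
        case True
        then have "Re z0 - \<rho> - R \<le> x - r" "x - r \<le> Re z0 + \<rho>" "0 < x - r" using r \<rho> by auto
        have "m \<le> (x - r) powr \<alpha>"
        proof (cases "0 \<le> \<alpha>")
          case True
          then have "(Re z0 - \<rho> - R) powr \<alpha> \<le> (x - r) powr \<alpha>"
            using \<open>Re z0 - \<rho> - R \<le> x - r\<close> \<rho> by (intro powr_mono2) auto
          then show ?thesis unfolding m_def by linarith
        next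
          case False
          then have "(Re z0 + \<rho>) powr \<alpha> \<le> (x - r) powr \<alpha>"
            using \<open>x - r \<le> Re z0 + \<rho>\<close> \<open>0 < x - r\<close> by (intro powr_mono2') auto
          then show ?thesis unfolding m_def by linarith
        qed
        then have "ennreal m * ennreal c \<le> ennreal ((x - r) powr \<alpha>) * vertical_sqnorm f x"
          using lower[of x] True \<rho> by (intro mult_mono) (auto simp: ennreal_leI)
        then show ?thesis using True \<open>0 < x - r\<close> m c by (simp add: ennreal_mult')
      qed simp
    qed
    finally show ?thesis .
  qed
  moreover have "0 < m * c * (2 * \<rho>)" using m c \<rho> by simp
  ultimately show ?thesis using that by blast
qed

section \<open>Orbits\<close>

lemma bergman_norm_le_of_sqnorm_le:
  assumes "bergman_sqnorm \<alpha> g \<le> B" "B < \<infinity>"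
  shows "bergman_norm \<alpha> g \<le> ereal (sqrt (enn2real B))"
proof -
  have "bergman_sqnorm \<alpha> g \<noteq> \<infinity>" using assms by auto
  moreover have "enn2real (bergman_sqnorm \<alpha> g) \<le> enn2real B" using assms by (intro enn2real_mono) auto
  ultimately show ?thesis by (simp add: bergman_norm_def)
qed

lemma bergman_norm_ge_of_sqnorm_ge:
  assumes "ennreal \<delta> \<le> bergman_sqnorm \<alpha> g" "0 \<le> \<delta>"
  shows "ereal (sqrt \<delta>) \<le> bergman_norm \<alpha> g"
proof (cases "bergman_sqnorm \<alpha> g = \<infinity>")
  case False
  then have "enn2real (ennreal \<delta>) \<le> enn2real (bergman_sqnorm \<alpha> g)"
    using assms by (intro enn2real_mono) (auto simp: top.not_eq_extremum)
  then show ?thesis using False assms by (simp add: bergman_norm_def)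
qed (simp add: bergman_norm_def)

lemma limsup_bergman_norm_iterate_finite:
  assumes "-1 < \<alpha>" "1 \<le> a" "0 \<le> Re b" "f \<in> bergman_space \<alpha>"
  shows "limsup (\<lambda>n. bergman_norm \<alpha> ((comp_op (\<lambda>w. of_real a * w + b) ^^ n) f)) < \<infinity>"
proof -
  have holo: "f holomorphic_on right_half_plane" and fin: "bergman_sqnorm \<alpha> f < \<infinity>"
    using assms(4) by (auto simp: bergman_space_def)
  have cont: "continuous_on right_half_plane f" using holo holomorphic_on_imp_continuous_on by blast
  obtain K where K: "\<And>r. 0 \<le> r \<Longrightarrow> shifted_sqnorm \<alpha> f r \<le> ennreal K * shifted_sqnorm \<alpha> f 0"
    using shifted_sqnorm_le_const[OF assms(1) holo] by blast
  have f: "bergman_sqnorm \<alpha> f = ennreal (1 / pi) * shifted_sqnorm \<alpha> f 0"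
    using bergman_sqnorm_comp_affine[OF cont, of 1 0 \<alpha>] by (simp add: o_def)
  define B where "B = ennreal K * bergman_sqnorm \<alpha> f"
  have "bergman_sqnorm \<alpha> ((comp_op (\<lambda>w. of_real a * w + b) ^^ n) f) \<le> B" for n
  proof -
    have "(a ^ n) powr (-2 - \<alpha>) \<le> 1"
      using powr_mono2'[of "-2 - \<alpha>" 1 "a ^ n"] assms by (simp add: one_le_power)
    then have "ennreal ((a ^ n) powr (-2 - \<alpha>)) * shifted_sqnorm \<alpha> f (Re b * (\<Sum>k<n. a ^ k))
        \<le> 1 * (ennreal K * shifted_sqnorm \<alpha> f 0)"
      using K[of "Re b * (\<Sum>k<n. a ^ k)"] assms by (intro mult_mono) (auto simp: ennreal_leI sum_nonneg)
    then have "ennreal (1 / pi) * (ennreal ((a ^ n) powr (-2 - \<alpha>)) * shifted_sqnorm \<alpha> f (Re b * (\<Sum>k<n. a ^ k)))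
        \<le> ennreal (1 / pi) * (ennreal K * shifted_sqnorm \<alpha> f 0)"
      by (intro mult_left_mono) auto
    moreover have "0 < a" using assms(2) by simp
    ultimately show ?thesis
      unfolding B_def f using bergman_sqnorm_iterate[OF cont _ assms(3)] by (simp add: ac_simps)
  qed
  moreover have "B < \<infinity>" using fin by (simp add: B_def ennreal_mult_less_top)
  ultimately have "limsup (\<lambda>n. bergman_norm \<alpha> ((comp_op (\<lambda>w. of_real a * w + b) ^^ n) f)) \<le> ereal (sqrt (enn2real B))"
    by (intro Limsup_bounded always_eventually allI bergman_norm_le_of_sqnorm_le)
  then show ?thesis using order.strict_trans1 by fastforce
qed

lemma liminf_bergman_norm_iterate_pos:
  assumes "-1 < \<alpha>" "0 < a" "a < 1" "0 \<le> Re b" "continuous_on right_half_plane f"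
    and "Re b / (1 - a) < Re z0" "f z0 \<noteq> 0"
  shows "0 < liminf (\<lambda>n. bergman_norm \<alpha> ((comp_op (\<lambda>w. of_real a * w + b) ^^ n) f))"
proof -
  define R where "R = Re b / (1 - a)"
  have "0 \<le> R" using assms by (simp add: R_def)
  then obtain \<delta> where \<delta>: "0 < \<delta>" "\<And>r. 0 \<le> r \<Longrightarrow> r \<le> R \<Longrightarrow> ennreal \<delta> \<le> shifted_sqnorm \<alpha> f r"
    using shifted_sqnorm_bounded_below[OF assms(5)] assms(6,7) unfolding R_def by blast
  have "ennreal (\<delta> / pi) \<le> bergman_sqnorm \<alpha> ((comp_op (\<lambda>w. of_real a * w + b) ^^ n) f)" for n
  proof -
    have "(\<Sum>k<n. a ^ k) = (1 - a ^ n) / (1 - a)" using assms(3) by (simp add: sum_gp_strict)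
    also have "\<dots> \<le> 1 / (1 - a)" using assms(2,3) by (intro divide_right_mono) auto
    finally have "Re b * (\<Sum>k<n. a ^ k) \<le> R"
      unfolding R_def using assms(4) by (simp add: mult_left_mono divide_inverse)
    moreover have "1 \<le> (a ^ n) powr (-2 - \<alpha>)"
      using powr_mono2'[of "-2 - \<alpha>" "a ^ n" 1] assms(1-3) by (simp add: power_le_one)
    ultimately have "1 * ennreal \<delta> \<le> ennreal ((a ^ n) powr (-2 - \<alpha>)) * shifted_sqnorm \<alpha> f (Re b * (\<Sum>k<n. a ^ k))"
      using \<delta>(2) assms(2,4) by (intro mult_mono) (auto simp: ennreal_leI sum_nonneg)
    then have "ennreal (1 / pi) * ennreal \<delta> \<le> bergman_sqnorm \<alpha> ((comp_op (\<lambda>w. of_real a * w + b) ^^ n) f)"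
      unfolding bergman_sqnorm_iterate[OF assms(5,2,4)] by (intro mult_left_mono) auto
    then show ?thesis by (simp add: ennreal_mult'[symmetric])
  qed
  then have "ereal (sqrt (\<delta> / pi)) \<le> liminf (\<lambda>n. bergman_norm \<alpha> ((comp_op (\<lambda>w. of_real a * w + b) ^^ n) f))"
    using \<delta>(1) by (intro Liminf_bounded always_eventually allI bergman_norm_ge_of_sqnorm_ge) auto
  moreover have "0 < ereal (sqrt (\<delta> / pi))" using \<delta>(1) by simp
  ultimately show ?thesis by (meson order.strict_trans2)
qed

lemma analytic_continuation_right_half_plane:
  assumes "f holomorphic_on right_half_plane" "\<forall>z. R < Re z \<longrightarrow> f z = 0"
  shows "\<forall>z\<in>right_half_plane. f z = 0"
proof
  fix z assume z: "z \<in> right_half_plane"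
  show "f z = 0"
  proof (rule analytic_continuation_open[where s = "{w. max R 0 < Re w}" and s' = right_half_plane
        and f = f and g = "\<lambda>_. 0"])
    show "open {w. max R 0 < Re w}" by (rule open_halfspace_Re_gt)
    have "complex_of_real (max R 0 + 1) \<in> {w. max R 0 < Re w}" by (simp add: max_def)
    then show "{w. max R 0 < Re w} \<noteq> {}" by blast
    show "connected right_half_plane"
      unfolding right_half_plane_def by (intro convex_connected convex_halfspace_Re_gt)
  qed (use assms z open_right_half_plane in \<open>auto simp: right_half_plane_def\<close>)
qed

lemma bergman_norm_iterate_vanishing:
  assumes "0 < a" "0 \<le> Re b" "\<forall>z\<in>right_half_plane. f z = 0"
  shows "bergman_norm \<alpha> ((comp_op (\<lambda>w. of_real a * w + b) ^^ n) f) = 0"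
proof -
  have "continuous_on right_half_plane f"
    by (rule continuous_on_eq[OF continuous_on_const]) (use assms(3) in auto)
  then show ?thesis
    using bergman_sqnorm_iterate[OF _ assms(1,2)] shifted_sqnorm_eq_zero[OF assms(3)]
    by (simp add: bergman_norm_def)
qed

theorem mainTheorem3:
  fixes \<alpha> a :: real and b :: complex
  assumes "\<alpha> > -1" and "a > 0" and "Re b \<ge> 0"
  shows "\<not> (\<exists>f \<in> bergman_space \<alpha>.
             liminf (\<lambda>n. bergman_norm \<alpha> ((comp_op (\<lambda>w. complex_of_real a * w + b) ^^ n) f)) = 0 \<and>
             limsup (\<lambda>n. bergman_norm \<alpha> ((comp_op (\<lambda>w. complex_of_real a * w + b) ^^ n) f)) = \<infinity>)"
proof
  assume "\<exists>f \<in> bergman_space \<alpha>.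
             liminf (\<lambda>n. bergman_norm \<alpha> ((comp_op (\<lambda>w. complex_of_real a * w + b) ^^ n) f)) = 0 \<and>
             limsup (\<lambda>n. bergman_norm \<alpha> ((comp_op (\<lambda>w. complex_of_real a * w + b) ^^ n) f)) = \<infinity>"
  then obtain f where f: "f \<in> bergman_space \<alpha>"
    and liminf: "liminf (\<lambda>n. bergman_norm \<alpha> ((comp_op (\<lambda>w. complex_of_real a * w + b) ^^ n) f)) = 0"
    and limsup: "limsup (\<lambda>n. bergman_norm \<alpha> ((comp_op (\<lambda>w. complex_of_real a * w + b) ^^ n) f)) = \<infinity>"
    by blast
  have holo: "f holomorphic_on right_half_plane" using f by (simp add: bergman_space_def)
  consider "1 \<le> a"
    | "a < 1" "\<exists>z0. Re b / (1 - a) < Re z0 \<and> f z0 \<noteq> 0"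
    | "\<forall>z. Re b / (1 - a) < Re z \<longrightarrow> f z = 0"
    by force
  then show False
  proof cases
    case 1
    then show False using limsup_bergman_norm_iterate_finite[OF assms(1) 1 assms(3) f] limsup by simp
  next
    case 2
    then show False
      using liminf_bergman_norm_iterate_pos[OF assms(1,2) _ assms(3) holomorphic_on_imp_continuous_on[OF holo]]
        liminf by auto
  next
    case 3
    then have "\<forall>n. bergman_norm \<alpha> ((comp_op (\<lambda>w. complex_of_real a * w + b) ^^ n) f) = 0"
      using bergman_norm_iterate_vanishing[OF assms(2,3)] analytic_continuation_right_half_plane[OF holo] by blast
    then show False using limsup by (simp add: Limsup_const)
  qed
qed

end
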